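(* Consider the active-subspace NMPC scheme (Algorithm 1, described in the context below) based on the reduced problem $\widehat{\mathscr{P}}(x_k,\tilde{\mathbf{w}}_k)$, in which the shift-based update of the feasible guess is replaced by $\tilde{\mathbf{u}}_{k+1}=F(\mathbf{u}_k)$ for a generic constructor of feasible guesses $F:\mathbb{U}^N\to\mathbb{U}^N$. Then this active-subspace NMPC scheme is recursively feasible, i.e., whenever $\widehat{\mathscr{P}}(x_k,\tilde{\mathbf{w}}_k)$ is feasible, so is $\widehat{\mathscr{P}}(x_{k+1},\tilde{\mathbf{w}}_{k+1})$.
   Context: System: $x^+=f(x,u)$ with continuous $f:\mathbb{X}\times\mathbb{U}\to\mathbb{X}$, $\mathbb{X}\subseteq\mathbb{R}^n$, $\mathbb{U}\subseteq\mathbb{R}^m$ closed, containing the origin in their interior; nominal setting $x_{k+1}=f(x_k,u_{k|k})$. $\mathscr{P}(x_k)$: the finite-horizon ($N$) optimal control problem of minimizing $\sum_{i=0}^{N-1}\ell(x_{k+i|k},u_{k+i|k})+V_f(x_{k+N|k})$ over $\mathbf{u}_k=[u_{k|k}^\top,\dots,u_{k+N-1|k}^\top]^\top$ subject to $x_{k|k}=x_k$, $x_{k+i+1|k}=f(x_{k+i|k},u_{k+i|k})$, $u_{k+i|k}\in\mathbb{U}$, $x_{k+i|k}\in\mathbb{X}$, $x_{k+N|k}\in\mathbb{X}_f$; after eliminating states: $\min_{\mathbf{u}_k}J(x_k,\mathbf{u}_k)$ s.t. $g(x_k,\mathbf{u}_k)\le0$. Generic constructor for feasible guesses: a map $F:\mathbb{U}^N\to\mathbb{U}^N$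 such that, whenever $\mathbf{u}_k$ is feasible for $\mathscr{P}(x_k)$ (the predicted control sequence at time $k$), $F(\mathbf{u}_k)$ is feasible for $\mathscr{P}(x_{k+1})$ with $x_{k+1}=f(x_k,u_{k|k})$. $T=[T_1\ T_2]\in\mathbb{R}^{Nm\times Nm}$ orthonormal, $T_1$ with $q$ columns. Reduced problem $\widehat{\mathscr{P}}(x_k,\tilde{\mathbf{w}}_k)$: minimize $J(x_k,T_1\mathbf{v}_k+\mu_kT_2\tilde{\mathbf{w}}_k)$ over $(\mathbf{v}_k,\mu_k)\in\mathbb{R}^q\times\mathbb{R}$ subject to $g(x_k,T_1\mathbf{v}_k+\mu_kT_2\tilde{\mathbf{w}}_k)\le0$. Algorithm (modified Algorithm 1): at $k=0$ solve $\mathscr{P}(x_0)$ for a feasible $\tilde{\mathbf{u}}_0$, set $\tilde{\mathbf{w}}_0=T_2^\top\tilde{\mathbf{u}}_0$. At each $k$: solve $\widehat{\mathscr{P}}(x_k,\tilde{\mathbf{w}}_k)$ for $(\mathbf{v}_k^\star,\mu_k^\star)$; if $J(x_k,T_1\mathbf{v}_k^\star+\mu_k^\star T_2\tilde{\mathbf{w}}_k)\le J(x_k,\tilde{\mathbf{u}}_k)$ set $\mathbf{u}_k=T_1\mathbf{v}_k^\star+\mu_k^\star T_2\tilde{\mathbf{w}}_k$, else $\mathbf{u}_k=\tilde{\mathbf{u}}_k$; apply $u_{k|k}$; set $\tilde{\mathbf{u}}_{k+1}=F(\mathbf{u}_k)$ and $\tilde{\mathbf{w}}_{k+1}=T_2^\top\tilde{\mathbf{u}}_{k+1}$.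 *)

theory Defs
  imports "HOL-Analysis.Analysis"
begin

text \<open>Predicted control sequences are functions nat => real^'m (only the
entries 0..N-1 matter).  The stacked vector in R^(Nm) is indexed by pairs
(i, j) with i < N (time) and j :: 'm (input component).  The orthonormal
matrix T = [T1 T2] has rows indexed by such pairs and columns indexed by
'q + 'r: column Inl a is a column of T1 (q = CARD('q) columns), column Inr b
a column of T2.\<close>

fun pred_state :: "('x \<Rightarrow> 'u \<Rightarrow> 'x) \<Rightarrow> 'x \<Rightarrow> (nat \<Rightarrow> 'u) \<Rightarrow> nat \<Rightarrow> 'x" where
  "pred_state f x u 0 = x"
| "pred_state f x u (Suc i) = f (pred_state f x u i) (u i)"

definition feasible_P ::
  "('x \<Rightarrow> 'u \<Rightarrow> 'x) \<Rightarrow> 'x set \<Rightarrow> 'u set \<Rightarrow> 'x set \<Rightarrow> nat \<Rightarrow> 'x \<Rightarrow> (nat \<Rightarrow> 'u) \<Rightarrow> bool" where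
  "feasible_P f X U Xf N x u \<longleftrightarrow>
     (\<forall>i<N. u i \<in> U) \<and> (\<forall>i<N. pred_state f x u i \<in> X) \<and> pred_state f x u N \<in> Xf"

definition cost_J ::
  "('x \<Rightarrow> 'u \<Rightarrow> 'x) \<Rightarrow> ('x \<Rightarrow> 'u \<Rightarrow> real) \<Rightarrow> ('x \<Rightarrow> real) \<Rightarrow> nat \<Rightarrow> 'x \<Rightarrow> (nat \<Rightarrow> 'u) \<Rightarrow> real" where
  "cost_J f l Vf N x u = (\<Sum>i<N. l (pred_state f x u i) (u i)) + Vf (pred_state f x u N)"

definition orthonormal_T ::
  "nat \<Rightarrow> (nat \<Rightarrow> 'm::finite \<Rightarrow> ('q::finite + 'r::finite) \<Rightarrow> real) \<Rightarrow> bool" where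
  "orthonormal_T N T \<longleftrightarrow> CARD('q + 'r) = N * CARD('m) \<and>
     (\<forall>c c'. (\<Sum>i<N. \<Sum>j\<in>UNIV. T i j c * T i j c') = (if c = c' then 1 else 0))"

definition recon ::
  "(nat \<Rightarrow> 'm::finite \<Rightarrow> ('q::finite + 'r::finite) \<Rightarrow> real) \<Rightarrow> real^'q \<Rightarrow> real \<Rightarrow> real^'r \<Rightarrow> nat \<Rightarrow> real^'m" where
  "recon T v mu w = (\<lambda>i. \<chi> j. \<Sum>c\<in>UNIV. T i j c *
       (case c of Inl a \<Rightarrow> v $ a | Inr b \<Rightarrow> mu * w $ b))"

definition T2t ::
  "nat \<Rightarrow> (nat \<Rightarrow> 'm::finite \<Rightarrow> ('q::finite + 'r::finite) \<Rightarrow> real) \<Rightarrow> (nat \<Rightarrow> real^'m) \<Rightarrow> real^'r" where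
  "T2t N T u = (\<chi> b. \<Sum>i<N. \<Sum>j\<in>UNIV. T i j (Inr b) * u i $ j)"

definition feasible_Phat ::
  "('x \<Rightarrow> real^'m \<Rightarrow> 'x) \<Rightarrow> 'x set \<Rightarrow> (real^'m) set \<Rightarrow> 'x set \<Rightarrow> nat \<Rightarrow>
   (nat \<Rightarrow> 'm::finite \<Rightarrow> ('q::finite + 'r::finite) \<Rightarrow> real) \<Rightarrow> 'x \<Rightarrow> real^'r \<Rightarrow> bool" where
  "feasible_Phat f X U Xf N T x w \<longleftrightarrow>
     (\<exists>(v::real^'q) mu. feasible_P f X U Xf N x (recon T v mu w))"

end

theory Submission
  imports Defs Jordan_Normal_Form.Determinant
begin

text \<open>A square matrix with orthonormal columns also has orthonormal rows, so
  T1 T1^T + T2 T2^T = I and every input sequence u equals T1 (T1^T u) + 1 * T2 (T2^T u).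
  Hence the reduced problem with direction T2^T u is feasible whenever u is
  feasible for the full problem.  By induction the guess of every step is
  feasible for the full problem: the applied sequence is either that guess or a
  feasible point of the reduced problem, and F maps it to a feasible guess for
  the successor state.  Only the orthonormality of T and the feasibility
  property of F enter.\<close>

lemma orthonormal_rows_if_orthonormal_columns:
  fixes A :: "'i \<Rightarrow> 'j \<Rightarrow> 'a::field"
  assumes R: "finite R" and C: "finite C" and card: "card C = card R"
    and cols: "\<And>c c'. c \<in> C \<Longrightarrow> c' \<in> C \<Longrightarrow>
                 (\<Sum>r\<in>R. A r c * A r c') = (if c = c' then 1 else 0)"
    and r: "r \<in> R" and r': "r' \<in> R"
  shows "(\<Sum>c\<in>C. A r c * A r' c) = (if r = r' then 1 else 0)"
proof -
  let ?n = "card R"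
  obtain hr where hr: "bij_betw hr {0..<?n} R"
    using ex_bij_betw_nat_finite[OF R] by blast
  obtain hc where hc: "bij_betw hc {0..<?n} C"
    using ex_bij_betw_nat_finite[OF C] card by auto
  have hr_eq: "hr p = hr p' \<longleftrightarrow> p = p'" if "p < ?n" "p' < ?n" for p p'
    using inj_on_eq_iff[OF bij_betw_imp_inj_on[OF hr]] that by simp
  have hc_eq: "hc s = hc s' \<longleftrightarrow> s = s'" if "s < ?n" "s' < ?n" for s s'
    using inj_on_eq_iff[OF bij_betw_imp_inj_on[OF hc]] that by simp
  have sum_R: "(\<Sum>p<?n. g (hr p)) = (\<Sum>r\<in>R. g r)" for g :: "'i \<Rightarrow> 'a"
    using sum.reindex_bij_betw[OF hr, of g] by (simp add: atLeast0LessThan)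
  have sum_C: "(\<Sum>s<?n. g (hc s)) = (\<Sum>c\<in>C. g c)" for g :: "'j \<Rightarrow> 'a"
    using sum.reindex_bij_betw[OF hc, of g] by (simp add: atLeast0LessThan)
  define M where "M = Matrix.mat ?n ?n (\<lambda>(p, s). A (hr p) (hc s))"
  have M: "M \<in> carrier_mat ?n ?n" and Mt: "transpose_mat M \<in> carrier_mat ?n ?n"
    unfolding M_def by simp_all
  have "transpose_mat M * M = 1\<^sub>m ?n"
  proof (rule eq_matI)
    fix s s' assume s: "s < dim_row (1\<^sub>m ?n)" and s': "s' < dim_col (1\<^sub>m ?n)"
    have "(transpose_mat M * M) $$ (s, s') = (\<Sum>p<?n. A (hr p) (hc s) * A (hr p) (hc s'))"
      using s s' unfolding M_def by (simp add: scalar_prod_def atLeast0LessThan)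
    also have "\<dots> = (\<Sum>r\<in>R. A r (hc s) * A r (hc s'))"
      by (rule sum_R)
    also have "\<dots> = (if s = s' then 1 else 0)"
      using s s' cols bij_betw_apply[OF hc] hc_eq by simp
    finally show "(transpose_mat M * M) $$ (s, s') = 1\<^sub>m ?n $$ (s, s')"
      using s s' by simp
  qed (use M in auto)
  then have MMt: "M * transpose_mat M = 1\<^sub>m ?n"
    by (rule mat_mult_left_right_inverse[OF Mt M])
  obtain p p' where p: "p < ?n" "hr p = r" and p': "p' < ?n" "hr p' = r'"
    using r r' bij_betw_imp_surj_on[OF hr] by (metis atLeastLessThan_iff imageE)
  have "(\<Sum>c\<in>C. A r c * A r' c) = (\<Sum>s<?n. A (hr p) (hc s) * A (hr p') (hc s))"
    using p p' sum_C[of "\<lambda>c. A r c * A r' c"] by simp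
  also have "\<dots> = (M * transpose_mat M) $$ (p, p')"
    using p p' unfolding M_def by (simp add: scalar_prod_def atLeast0LessThan)
  also have "\<dots> = (if r = r' then 1 else 0)"
    using MMt p p' hr_eq by auto
  finally show ?thesis .
qed

lemma orthonormal_T_rows:
  fixes T :: "nat \<Rightarrow> 'm::finite \<Rightarrow> ('q::finite + 'r::finite) \<Rightarrow> real"
  assumes orth: "orthonormal_T N T" and i: "i < N" and i': "i' < N"
  shows "(\<Sum>c\<in>UNIV. T i j c * T i' j' c) = (if (i, j) = (i', j') then 1 else 0)"
proof -
  let ?R = "{..<N} \<times> (UNIV :: 'm set)"
  have card: "card (UNIV :: ('q + 'r) set) = card ?R"
    using orth by (simp add: orthonormal_T_def card_cartesian_product)
  have cols: "(\<Sum>r\<in>?R. T (fst r) (snd r) c * T (fst r) (snd r) c') = (if c = c' then 1 else 0)"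
    for c c'
  proof -
    have "(\<Sum>r\<in>?R. T (fst r) (snd r) c * T (fst r) (snd r) c')
            = (\<Sum>i<N. \<Sum>j\<in>UNIV. T i j c * T i j c')"
      by (simp add: sum.cartesian_product split_beta)
    then show ?thesis
      using orth by (simp add: orthonormal_T_def)
  qed
  show ?thesis
    using orthonormal_rows_if_orthonormal_columns[of ?R UNIV _ "(i, j)" "(i', j')", OF _ _ card cols] i i'
    by simp
qed

definition T1t :: "nat \<Rightarrow> (nat \<Rightarrow> 'm::finite \<Rightarrow> ('q::finite + 'r::finite) \<Rightarrow> real) \<Rightarrow>
    (nat \<Rightarrow> real^'m) \<Rightarrow> real^'q" where
  "T1t N T u = (\<chi> a. \<Sum>i<N. \<Sum>j\<in>UNIV. T i j (Inl a) * u i $ j)"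

lemma recon_T1t_T2t:
  fixes T :: "nat \<Rightarrow> 'm::finite \<Rightarrow> ('q::finite + 'r::finite) \<Rightarrow> real"
  assumes orth: "orthonormal_T N T" and i: "i < N"
  shows "recon T (T1t N T u) 1 (T2t N T u) i = u i"
proof (rule Finite_Cartesian_Product.vec_eq_iff[THEN iffD2], rule allI)
  fix j
  have "recon T (T1t N T u) 1 (T2t N T u) i $ j
          = (\<Sum>c\<in>UNIV. T i j c * (\<Sum>i'<N. \<Sum>j'\<in>UNIV. T i' j' c * u i' $ j'))"
    unfolding recon_def T1t_def T2t_def by (auto intro!: sum.cong split: sum.split)
  also have "\<dots> = (\<Sum>c\<in>UNIV. \<Sum>i'<N. \<Sum>j'\<in>UNIV. T i j c * T i' j' c * u i' $ j')"
    by (simp add: sum_distrib_left mult.assoc)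
  also have "\<dots> = (\<Sum>i'<N. \<Sum>c\<in>UNIV. \<Sum>j'\<in>UNIV. T i j c * T i' j' c * u i' $ j')"
    by (rule sum.swap)
  also have "\<dots> = (\<Sum>i'<N. \<Sum>j'\<in>UNIV. \<Sum>c\<in>UNIV. T i j c * T i' j' c * u i' $ j')"
    by (intro sum.cong refl sum.swap)
  also have "\<dots> = (\<Sum>i'<N. \<Sum>j'\<in>UNIV. (\<Sum>c\<in>UNIV. T i j c * T i' j' c) * u i' $ j')"
    by (simp add: sum_distrib_right)
  also have "\<dots> = (\<Sum>i'<N. \<Sum>j'\<in>UNIV. if (i', j') = (i, j) then u i' $ j' else 0)"
    using orthonormal_T_rows[OF orth i] by (intro sum.cong) auto
  also have "\<dots> = (\<Sum>i'<N. if i' = i then u i $ j else 0)"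
  proof (rule sum.cong[OF refl])
    show "(\<Sum>j'\<in>UNIV. if (i', j') = (i, j) then u i' $ j' else 0) = (if i' = i then u i $ j else 0)"
      for i'
      by (cases "i' = i") simp_all
  qed
  also have "\<dots> = u i $ j"
    using i by simp
  finally show "recon T (T1t N T u) 1 (T2t N T u) i $ j = u i $ j" .
qed

lemma feasible_P_cong:
  assumes "\<And>i. i < N \<Longrightarrow> u i = u' i"
  shows "feasible_P f X U Xf N x u \<longleftrightarrow> feasible_P f X U Xf N x u'"
proof -
  have "pred_state f x u i = pred_state f x u' i" if "i \<le> N" for i
    using that assms by (induction i) auto
  then show ?thesis
    using assms unfolding feasible_P_def by auto
qed

lemma feasible_Phat_if_feasible_P:
  fixes T :: "nat \<Rightarrow> 'm::finite \<Rightarrow> ('q::finite + 'r::finite) \<Rightarrow> real"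
  assumes "orthonormal_T N T" and "feasible_P f X U Xf N x u"
  shows "feasible_Phat f X U Xf N T x (T2t N T u)"
proof -
  have "feasible_P f X U Xf N x (recon T (T1t N T u) 1 (T2t N T u)) \<longleftrightarrow>
          feasible_P f X U Xf N x u"
    by (rule feasible_P_cong) (rule recon_T1t_T2t[OF assms(1)])
  then have "feasible_P f X U Xf N x (recon T (T1t N T u) 1 (T2t N T u))"
    using assms(2) by blast
  then show ?thesis
    unfolding feasible_Phat_def by blast
qed

theorem corollary1:
  fixes f :: "real^'n \<Rightarrow> real^'m \<Rightarrow> real^'n"
    and X Xf :: "(real^'n) set" and U :: "(real^'m) set"
    and l :: "real^'n \<Rightarrow> real^'m \<Rightarrow> real" and Vf :: "real^'n \<Rightarrow> real"
    and N :: nat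
    and T :: "nat \<Rightarrow> 'm::finite \<Rightarrow> ('q::finite + 'r::finite) \<Rightarrow> real"
    and F :: "(nat \<Rightarrow> real^'m) \<Rightarrow> (nat \<Rightarrow> real^'m)"
    and xs :: "nat \<Rightarrow> real^'n"
    and ut us :: "nat \<Rightarrow> (nat \<Rightarrow> real^'m)"
    and vs :: "nat \<Rightarrow> real^'q" and mus :: "nat \<Rightarrow> real"
  assumes f_maps: "\<forall>x\<in>X. \<forall>u\<in>U. f x u \<in> X"
    and f_cont: "continuous_on (X \<times> U) (\<lambda>(x, u). f x u)"
    and X_closed: "closed X" and U_closed: "closed U"
    and X_orig: "0 \<in> interior X" and U_orig: "0 \<in> interior U"
    and T_orth: "orthonormal_T N T"
    and F_maps: "\<forall>u. (\<forall>i<N. u i \<in> U) \<longrightarrow> (\<forall>i<N. F u i \<in> U)"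
    and F_feas: "\<forall>x u. feasible_P f X U Xf N x u \<longrightarrow>
                       feasible_P f X U Xf N (f x (u 0)) (F u)"
    and init: "feasible_P f X U Xf N (xs 0) (ut 0)"
    and solve: "\<forall>k. feasible_Phat f X U Xf N T (xs k) (T2t N T (ut k)) \<longrightarrow>
                  feasible_P f X U Xf N (xs k) (recon T (vs k) (mus k) (T2t N T (ut k)))"
    and select: "\<forall>k. us k =
                  (if cost_J f l Vf N (xs k) (recon T (vs k) (mus k) (T2t N T (ut k)))
                        \<le> cost_J f l Vf N (xs k) (ut k)
                   then recon T (vs k) (mus k) (T2t N T (ut k)) else ut k)"
    and dyn: "\<forall>k. xs (Suc k) = f (xs k) (us k 0)"
    and update: "\<forall>k. ut (Suc k) = F (us k)"
  shows "\<forall>k. feasible_Phat f X U Xf N T (xs k) (T2t N T (ut k)) \<longrightarrow>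
             feasible_Phat f X U Xf N T (xs (Suc k)) (T2t N T (ut (Suc k)))"
proof -
  have guess_feasible: "feasible_P f X U Xf N (xs k) (ut k)" for k
  proof (induction k)
    case 0
    show ?case using init .
  next
    case (Suc k)
    have "feasible_P f X U Xf N (xs k) (recon T (vs k) (mus k) (T2t N T (ut k)))"
      using solve feasible_Phat_if_feasible_P[OF T_orth Suc] by simp
    then have "feasible_P f X U Xf N (xs k) (us k)"
      using Suc select by simp
    then show ?case
      using F_feas dyn update by simp
  qed
  show ?thesis
    by (intro allI impI) (rule feasible_Phat_if_feasible_P[OF T_orth guess_feasible])
qed

end
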